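(* Suppose Assumption (A1) holds, and let $\{x_k\}_{k\in\mathbb N}$, $\{y_k\}_{k\in\mathbb N}$, $\{u_k\}_{k\in\mathbb N}$ be generated by Algorithm NFBHF-M from arbitrary $x_0,u_0\in\mathcal H$. Then for every $x^*\in\operatorname{zer}(A+B+C)$ and every integer $k\ge 1$, $$\Phi_{k+1}(x^* )\le \Phi_k(x^* )-\Big(1-L_{k-1}-L_k-2\gamma_kL_k\mu-\gamma_k^2\mu^2-\frac{\gamma_k\beta}{2}\Big)\|y_k-x_k\|_S^2 .$$
   Context: $\mathcal H$ is a real Hilbert space. $\mathcal P(\mathcal H)$ denotes the set of bounded linear operators $S:\mathcal H\to\mathcal H$ that are self-adjoint and strongly positive ($\langle Sx,x\rangle\ge m\|x\|^2$ for some $m>0$ and all $x$); for such $S$, $S^{-1}\in\mathcal P(\mathcal H)$, $\langle x,y\rangle_S:=\langle Sx,y\rangle$ and $\|x\|_S:=\sqrt{\langle Sx,x\rangle}$. For $S\in\mathcal P(\mathcal H)$, a single-valued $T:\mathcal H\to\mathcal H$ is $L$-Lipschitz continuous w.r.t. $S$ if $\|Tx-Ty\|_{S^{-1}}\le L\|x-y\|_S$ for all $x,y$, and is $\beta^{-1}$-cocoercive w.r.t. $S$ ($\beta>0$) if $\langle Tx-Ty,x-y\rangle\ge \beta^{-1}\|Tx-Ty\|_{S^{-1}}^2$ for all $x,y$. $\operatorname{zer}(A+B+C)=\{x\in\mathcal H: 0\in Ax+Bx+Cx\}$. Assumption (A1): fix $S\in\mathcal P(\mathcal H)$. (i) $A:\mathcal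 H\to2^{\mathcal H}$ is maximally monotone; (ii) $B:\mathcal H\to\mathcal H$ is single-valued, monotone and $\mu$-Lipschitz continuous w.r.t. $S$ ($\mu\ge0$); (iii) $C:\mathcal H\to\mathcal H$ is $\beta^{-1}$-cocoercive w.r.t. $S$ for some $\beta>0$; (iv) $\operatorname{zer}(A+B+C)\neq\emptyset$; (v) there is $\gamma>0$ and, for each $k\in\mathbb N$, a step-size $\gamma_k\ge\gamma$, a constant $L_k\in[0,1)$ and a (possibly nonlinear) operator $M_k:\mathcal H\to\mathcal H$ such that $\gamma_kM_k-S$ is $L_k$-Lipschitz continuous w.r.t. $S$. (Under (v), $M_k$ is maximally monotone and strongly monotone, so $(M_k+A)^{-1}$ is single-valued with full domain.) Algorithm NFBHF-M (nonlinear forward–backward–half forward with momentum): given $x_0,u_0\in\mathcal H$, for $k=0,1,2,\dots$ $$y_k=(M_k+A)^{-1}\big(M_kx_k-(B+C)x_k+\gamma_k^{-1}u_k\big),\quad x_{k+1}=y_k-\gamma_kS^{-1}By_k+\gamma_kS^{-1}Bx_k,\quad u_{k+1}=(\gamma_kM_k-S)y_k-(\gamma_kM_k-S)x_k.$$ For $x\in\mathcal H$ and $k\ge1$, $\Phi_k(x):=\|x_k-x\|_S^2+2\langle u_k,x_k-x\rangle+L_{k-1}\|y_{k-1}-x_{k-1}\|_S^2$. *)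

theory Defs
  imports "HOL-Analysis.Analysis"
begin

definition pos_op :: "('a::real_inner \<Rightarrow> 'a) \<Rightarrow> bool" where
  "pos_op S \<longleftrightarrow> bounded_linear S \<and> (\<forall>x y. inner (S x) y = inner x (S y))
     \<and> (\<exists>m>0. \<forall>x. inner (S x) x \<ge> m * (norm x)\<^sup>2)"

definition normS :: "('a::real_inner \<Rightarrow> 'a) \<Rightarrow> 'a \<Rightarrow> real" where
  "normS S x = sqrt (inner (S x) x)"

definition lipschitz_wrt :: "('a::real_inner \<Rightarrow> 'a) \<Rightarrow> real \<Rightarrow> ('a \<Rightarrow> 'a) \<Rightarrow> bool" where
  "lipschitz_wrt S L T \<longleftrightarrow> (\<forall>x y. normS (inv S) (T x - T y) \<le> L * normS S (x - y))"

definition cocoercive_wrt :: "('a::real_inner \<Rightarrow> 'a) \<Rightarrow> real \<Rightarrow> ('a \<Rightarrow> 'a) \<Rightarrow> bool" where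
  "cocoercive_wrt S \<beta> T \<longleftrightarrow>
     (\<forall>x y. inner (T x - T y) (x - y) \<ge> (1 / \<beta>) * (normS (inv S) (T x - T y))\<^sup>2)"

definition monotone_op :: "('a::real_inner \<Rightarrow> 'a set) \<Rightarrow> bool" where
  "monotone_op A \<longleftrightarrow> (\<forall>x y u v. u \<in> A x \<longrightarrow> v \<in> A y \<longrightarrow> inner (u - v) (x - y) \<ge> 0)"

definition maximal_monotone :: "('a::real_inner \<Rightarrow> 'a set) \<Rightarrow> bool" where
  "maximal_monotone A \<longleftrightarrow> monotone_op A \<and>
     (\<forall>x u. (\<forall>y v. v \<in> A y \<longrightarrow> inner (u - v) (x - y) \<ge> 0) \<longrightarrow> u \<in> A x)"

definition monotone_single :: "('a::real_inner \<Rightarrow> 'a) \<Rightarrow> bool" where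
  "monotone_single B \<longleftrightarrow> (\<forall>x y. inner (B x - B y) (x - y) \<ge> 0)"

definition zer3 :: "('a::real_vector \<Rightarrow> 'a set) \<Rightarrow> ('a \<Rightarrow> 'a) \<Rightarrow> ('a \<Rightarrow> 'a) \<Rightarrow> 'a set" where
  "zer3 A B C = {x. \<exists>a\<in>A x. a + B x + C x = 0}"

definition Phi :: "('a::real_inner \<Rightarrow> 'a) \<Rightarrow> (nat \<Rightarrow> 'a) \<Rightarrow> (nat \<Rightarrow> 'a) \<Rightarrow> (nat \<Rightarrow> 'a)
    \<Rightarrow> (nat \<Rightarrow> real) \<Rightarrow> nat \<Rightarrow> 'a \<Rightarrow> real" where
  "Phi S xs ys us L k x = (normS S (xs k - x))\<^sup>2 + 2 * inner (us k) (xs k - x)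
      + L (k - 1) * (normS S (ys (k - 1) - xs (k - 1)))\<^sup>2"

end

(*
  Monotonicity of A, tested at y_k against the element -(B + C) x* of A x*, bounds
  <S(y_k - x_k), y_k - x*>. Expanding |x_k - x*|_S^2 and |x_{k+1} - x*|_S^2 around
  y_k - x* turns this into the usual forward-backward-half-forward descent, with errors
  controlled by the Lipschitz constant of B, the cocoercivity of C and the perturbation
  u_k - u_{k+1}. The momentum terms <u_k, y_k - x_k> and <u_{k+1}, S^-1 (B y_k - B x_k)>
  are bounded by Cauchy-Schwarz for the dual pair of norms |.|_{S^-1}, |.|_S, since
  gamma_j M_j - S is L_j-Lipschitz; the summand L_{k-1} |y_{k-1} - x_{k-1}|_S^2 of Phi_k
  absorbs the first of them. Completeness of H makes S onto, so S^-1 is a true inverse.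
*)
theory Submission
  imports Defs
begin

lemma bounded_linear_coercive_surj:
  fixes S :: "'a::{real_inner, complete_space} \<Rightarrow> 'a"
  assumes lin: "bounded_linear S" and m: "m > 0"
    and coercive: "\<And>x. m * (norm x)\<^sup>2 \<le> inner (S x) x"
  shows "surj S"
proof -
  obtain K where K: "m \<le> K" "\<And>x. norm (S x) \<le> K * norm x"
  proof -
    obtain K0 where "\<And>x. norm (S x) \<le> norm x * K0"
      using bounded_linear.bounded[OF lin] by blast
    then have "norm (S x) \<le> max K0 m * norm x" for x
      by (metis max.cobounded1 mult.commute mult_right_mono norm_ge_zero order_trans)
    then show thesis by (intro that[of "max K0 m"]) auto
  qed
  define t where "t = m / K\<^sup>2"
  define c where "c = sqrt (1 - m\<^sup>2 / K\<^sup>2)"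
  have "0 < K" using K(1) m by linarith
  then have t: "0 < t" and "m\<^sup>2 / K\<^sup>2 \<le> 1"
    using m K(1) by (auto simp: t_def power_mono)
  then have c: "0 \<le> c" "c < 1" "c\<^sup>2 = 1 - m\<^sup>2 / K\<^sup>2"
    using m \<open>0 < K\<close> by (auto simp: c_def)
  \<comment> \<open>\<open>z - t S z\<close> is a contraction, so Banach's fixed point theorem solves \<open>S x = b\<close>.\<close>
  have shrink: "norm (z - t *\<^sub>R S z) \<le> c * norm z" for z
  proof -
    have "(norm (z - t *\<^sub>R S z))\<^sup>2 = (norm z)\<^sup>2 - 2 * t * inner (S z) z + t\<^sup>2 * (norm (S z))\<^sup>2"
      unfolding power2_norm_eq_inner by (simp add: inner_diff inner_commute power2_eq_square algebra_simps)
    also have "\<dots> \<le> (norm z)\<^sup>2 - 2 * t * (m * (norm z)\<^sup>2) + t\<^sup>2 * (K * norm z)\<^sup>2"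
      using coercive[of z] K(2)[of z] t
      by (intro add_mono diff_mono mult_left_mono power_mono) auto
    also have "\<dots> = (1 - m\<^sup>2 / K\<^sup>2) * (norm z)\<^sup>2"
    proof -
      have "n - 2 * t * (m * n) + t\<^sup>2 * (K\<^sup>2 * n) = (1 - m\<^sup>2 / K\<^sup>2) * n" for n
        using \<open>0 < K\<close> by (simp add: t_def power2_eq_square field_simps)
      then show ?thesis by (simp only: power_mult_distrib)
    qed
    also have "\<dots> = (c * norm z)\<^sup>2"
      by (simp add: c(3) power_mult_distrib)
    finally show ?thesis
      by (rule power2_le_imp_le[OF _ mult_nonneg_nonneg[OF c(1) norm_ge_zero]])
  qed
  have "\<exists>x. b = S x" for b
  proof -
    let ?f = "\<lambda>x. x - t *\<^sub>R (S x - b)"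
    have diff: "?f x - ?f y = (x - y) - t *\<^sub>R S (x - y)" for x y
      by (simp add: linear_diff[OF bounded_linear.linear[OF lin]] scaleR_diff_right)
    have "\<forall>x y. dist (?f x) (?f y) \<le> c * dist x y"
      unfolding dist_norm diff by (intro allI shrink)
    then have "\<exists>!x. ?f x = x"
      by (rule banach_fix_type[OF c(1,2)])
    then obtain x where "t *\<^sub>R (S x - b) = 0"
      by auto
    then show ?thesis using t by auto
  qed
  then show ?thesis unfolding surj_def by blast
qed

context
  fixes S :: "'a::{real_inner, complete_space} \<Rightarrow> 'a"
  assumes S: "pos_op S"
begin

lemma pos_op_linear: "linear S"
  using S unfolding pos_op_def by (auto intro: bounded_linear.linear)

lemma pos_op_inner_commute: "inner (S x) y = inner (S y) x"
  using S unfolding pos_op_def by (metis inner_commute)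

lemma pos_op_inner_nonneg: "0 \<le> inner (S x) x"
  using S unfolding pos_op_def by (meson order_trans mult_nonneg_nonneg less_imp_le zero_le_power2)

lemma pos_op_surj: "surj S"
  using S bounded_linear_coercive_surj unfolding pos_op_def by blast

lemma pos_op_inj: "inj S"
proof -
  obtain m where "m > 0" "\<And>x. m * (norm x)\<^sup>2 \<le> inner (S x) x"
    using S unfolding pos_op_def by auto
  then have "S x = 0 \<Longrightarrow> x = 0" for x
    by (metis inner_zero_left mult_le_0_iff not_less power2_norm_eq_inner inner_gt_zero_iff)
  then show ?thesis using linear_inj_iff_eq_0[OF pos_op_linear] by blast
qed

lemma pos_op_inv_right [simp]: "S (inv S w) = w"
  using pos_op_surj by (simp add: surj_f_inv_f)

lemma pos_op_inv_diff: "inv S (v - w) = inv S v - inv S w"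
  by (rule injD[OF pos_op_inj]) (simp add: linear_diff[OF pos_op_linear])

lemma power2_normS: "(normS S v)\<^sup>2 = inner (S v) v"
  unfolding normS_def using pos_op_inner_nonneg by simp

lemma normS_nonneg: "0 \<le> normS S v"
  unfolding normS_def using pos_op_inner_nonneg by simp

lemma normS_inv_eq: "normS S (inv S w) = normS (inv S) w"
  unfolding normS_def by (simp add: inner_commute)

lemma power2_normS_inv: "(normS (inv S) w)\<^sup>2 = inner (inv S w) w"
  using power2_normS[of "inv S w"] by (simp add: normS_inv_eq inner_commute)

lemma power2_normS_diff:
  "(normS S (p - q))\<^sup>2 = (normS S p)\<^sup>2 - 2 * inner (S p) q + (normS S q)\<^sup>2"
  using pos_op_inner_commute[of q p]
  by (simp add: power2_normS linear_diff[OF pos_op_linear] inner_diff)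

lemma power2_normS_diff_scaleR_inv:
  "(normS S (p - r *\<^sub>R inv S w))\<^sup>2 = (normS S p)\<^sup>2 - 2 * (r * inner w p) + r\<^sup>2 * (normS (inv S) w)\<^sup>2"
proof -
  have "inner (S p) (r *\<^sub>R inv S w) = r * inner w p"
    using pos_op_inner_commute[of p "inv S w"] by simp
  moreover have "(normS S (r *\<^sub>R inv S w))\<^sup>2 = r\<^sup>2 * (normS (inv S) w)\<^sup>2"
    unfolding power2_normS power2_normS_inv
    by (simp add: linear_scale[OF pos_op_linear] inner_commute power2_eq_square)
  ultimately show ?thesis
    using power2_normS_diff[of p "r *\<^sub>R inv S w"] by simp
qed

lemma normS_cauchy_schwarz_abs: "\<bar>inner (S p) q\<bar> \<le> normS S p * normS S q"
proof -
  let ?P = "inner (S p) p" and ?Q = "inner (S q) q" and ?X = "inner (S p) q"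
  have quadratic: "0 \<le> ?P - 2 * t * ?X + t\<^sup>2 * ?Q" for t
    using pos_op_inner_nonneg[of "p - t *\<^sub>R q"] pos_op_inner_commute[of q p]
    by (simp add: linear_diff[OF pos_op_linear] linear_scale[OF pos_op_linear] inner_diff
        power2_eq_square algebra_simps)
  have "?X\<^sup>2 \<le> ?P * ?Q"
  proof (cases "?Q = 0")
    case True
    \<comment> \<open>a nonnegative affine function of \<open>t\<close> has slope zero\<close>
    have "?X = 0"
    proof (rule ccontr)
      assume "?X \<noteq> 0"
      then show False
        using quadratic[of "(?P + 1) / (2 * ?X)"] True by (simp add: field_simps)
    qed
    then show ?thesis using True by simp
  next
    case False
    then have "0 < ?Q" using pos_op_inner_nonneg[of q] by linarith
    then show ?thesis
      using quadratic[of "?X / ?Q"] by (simp add: field_simps power2_eq_square)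
  qed
  then have "\<bar>?X\<bar> \<le> sqrt (?P * ?Q)"
    using real_sqrt_le_mono by fastforce
  then show ?thesis
    unfolding normS_def by (simp add: real_sqrt_mult)
qed

lemma normS_inv_cauchy_schwarz_abs: "\<bar>inner w v\<bar> \<le> normS (inv S) w * normS S v"
  using normS_cauchy_schwarz_abs[of "inv S w" v] by (simp add: normS_inv_eq)

lemma lipschitz_wrt_inner_le:
  assumes "lipschitz_wrt S L F"
  shows "\<bar>inner (F p - F q) v\<bar> \<le> L * normS S (p - q) * normS S v"
proof -
  have "\<bar>inner (F p - F q) v\<bar> \<le> normS (inv S) (F p - F q) * normS S v"
    by (rule normS_inv_cauchy_schwarz_abs)
  also have "\<dots> \<le> L * normS S (p - q) * normS S v"
    using assms normS_nonneg unfolding lipschitz_wrt_def by (intro mult_right_mono) auto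
  finally show ?thesis .
qed

lemma cocoercive_wrt_three_point:
  assumes "cocoercive_wrt S \<beta> C" and "\<beta> > 0"
  shows "- inner (C x - C z) (y - z) \<le> \<beta> / 4 * (normS S (y - x))\<^sup>2"
proof -
  let ?a = "normS (inv S) (C x - C z)" and ?b = "normS S (y - x)"
  have "?a\<^sup>2 / \<beta> \<le> inner (C x - C z) (x - z)"
    using assms unfolding cocoercive_wrt_def by (simp add: field_simps)
  moreover have "- inner (C x - C z) (y - x) \<le> ?a * ?b"
    using normS_inv_cauchy_schwarz_abs[of "C x - C z" "y - x"] by linarith
  moreover have "?a * ?b \<le> ?a\<^sup>2 / \<beta> + \<beta> / 4 * ?b\<^sup>2"
  proof -
    have "0 \<le> (?a - \<beta> / 2 * ?b)\<^sup>2 / \<beta>" using assms(2) by simp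
    then show ?thesis using assms(2) by (simp add: power2_eq_square field_simps)
  qed
  moreover have "inner (C x - C z) (y - z) = inner (C x - C z) (x - z) + inner (C x - C z) (y - x)"
    by (simp add: inner_diff_right)
  ultimately show ?thesis by linarith
qed

lemma lipschitz_wrt_inner_le_sum_squares:
  assumes "lipschitz_wrt S L F" and "0 \<le> L"
  shows "2 * inner (F p - F q) v \<le> L * (normS S (p - q))\<^sup>2 + L * (normS S v)\<^sup>2"
proof -
  let ?a = "normS S (p - q)" and ?b = "normS S v"
  have "2 * inner (F p - F q) v \<le> L * (2 * (?a * ?b))"
    using lipschitz_wrt_inner_le[OF assms(1), of p q v] by simp
  also have "\<dots> \<le> L * (?a\<^sup>2 + ?b\<^sup>2)"
    using sum_squares_bound[of ?a ?b] assms(2) by (intro mult_left_mono) auto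
  finally show ?thesis by (simp add: distrib_left)
qed

lemma lipschitz_wrt_inner_inv_le:
  assumes F: "lipschitz_wrt S L F" and G: "lipschitz_wrt S \<mu> G" and "0 \<le> L"
  shows "\<bar>inner (F p - F q) (inv S (G p - G q))\<bar> \<le> L * \<mu> * (normS S (p - q))\<^sup>2"
proof -
  have "\<bar>inner (F p - F q) (inv S (G p - G q))\<bar> \<le> L * normS S (p - q) * normS (inv S) (G p - G q)"
    unfolding normS_inv_eq[symmetric] by (rule lipschitz_wrt_inner_le[OF F])
  also have "\<dots> \<le> L * normS S (p - q) * (\<mu> * normS S (p - q))"
    using G assms(3) normS_nonneg unfolding lipschitz_wrt_def
    by (intro mult_left_mono mult_nonneg_nonneg) auto
  finally show ?thesis by (simp add: power2_eq_square mult_ac)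
qed

lemma fbhf_step_estimate:
  assumes A: "monotone_op A" and B_mono: "monotone_single B" and B_lip: "lipschitz_wrt S \<mu> B"
    and \<beta>: "0 < \<beta>" and C: "cocoercive_wrt S \<beta> C" and \<gamma>: "0 < \<gamma>"
    and incl: "(1 / \<gamma>) *\<^sub>R (w - S (y - x)) - (B x + C x) \<in> A y"
    and x': "x' = y - \<gamma> *\<^sub>R inv S (B y - B x)"
    and z: "z \<in> zer3 A B C"
  shows "(normS S (x' - z))\<^sup>2 \<le> (normS S (x - z))\<^sup>2
    - (1 - \<gamma>\<^sup>2 * \<mu>\<^sup>2 - \<gamma> * \<beta> / 2) * (normS S (y - x))\<^sup>2 + 2 * inner w (y - z)"
proof -
  let ?d = "y - x" and ?e = "y - z" and ?b = "B y - B x" and ?c = "C x - C z"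
  let ?N = "(normS S ?d)\<^sup>2"
  obtain a where a: "a \<in> A z" "a = - B z - C z"
  proof -
    obtain a where "a \<in> A z" "a + B z + C z = 0"
      using z unfolding zer3_def by blast
    then show thesis
      by (metis that add_diff_cancel_left' diff_0 diff_diff_eq add.commute add.left_commute)
  qed
  have "0 \<le> \<gamma> * inner ((1 / \<gamma>) *\<^sub>R (w - S ?d) - (B x + C x) - a) ?e"
    using A incl a(1) \<gamma> unfolding monotone_op_def by simp
  also have "\<dots> = inner w ?e - inner (S ?d) ?e
      - \<gamma> * inner (B y - B z) ?e + \<gamma> * inner ?b ?e - \<gamma> * inner ?c ?e"
    using \<gamma> by (simp add: a(2) inner_diff_left inner_add_left algebra_simps)
  finally have mono: "inner (S ?d) ?e \<le> inner w ?e
      - \<gamma> * inner (B y - B z) ?e + \<gamma> * inner ?b ?e - \<gamma> * inner ?c ?e"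
    by linarith
  have x'_z: "x' - z = ?e - \<gamma> *\<^sub>R inv S ?b"
    by (simp add: x' algebra_simps)
  have "0 \<le> \<gamma> * inner (B y - B z) ?e"
    using B_mono \<gamma> unfolding monotone_single_def by simp
  moreover have "- (\<gamma> * inner ?c ?e) \<le> \<gamma> * (\<beta> / 4 * ?N)"
    using mult_left_mono[OF cocoercive_wrt_three_point[OF C \<beta>], of \<gamma>] \<gamma> by simp
  moreover have "\<gamma>\<^sup>2 * (normS (inv S) ?b)\<^sup>2 \<le> \<gamma>\<^sup>2 * (\<mu>\<^sup>2 * ?N)"
  proof -
    have "normS (inv S) ?b \<le> \<mu> * normS S ?d"
      using B_lip unfolding lipschitz_wrt_def by blast
    then have "(normS (inv S) ?b)\<^sup>2 \<le> (\<mu> * normS S ?d)\<^sup>2"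
      using normS_nonneg[of "inv S ?b"] by (intro power_mono) (auto simp: normS_inv_eq)
    then show ?thesis by (simp add: power_mult_distrib mult_left_mono)
  qed
  moreover have "(normS S (x - z))\<^sup>2 = (normS S ?e)\<^sup>2 - 2 * inner (S ?d) ?e + ?N"
    using power2_normS_diff[of ?e ?d] pos_op_inner_commute[of ?e ?d] by simp
  moreover have "(normS S (x' - z))\<^sup>2
      = (normS S ?e)\<^sup>2 - 2 * (\<gamma> * inner ?b ?e) + \<gamma>\<^sup>2 * (normS (inv S) ?b)\<^sup>2"
    unfolding x'_z by (rule power2_normS_diff_scaleR_inv)
  moreover have "(1 - \<gamma>\<^sup>2 * \<mu>\<^sup>2 - \<gamma> * \<beta> / 2) * ?N = ?N - \<gamma>\<^sup>2 * (\<mu>\<^sup>2 * ?N) - 2 * (\<gamma> * (\<beta> / 4 * ?N))"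
    by (simp add: algebra_simps)
  ultimately show ?thesis
    using mono by linarith
qed

lemma nfbhf_m_step_estimate:
  assumes A: "monotone_op A" and B_mono: "monotone_single B" and B_lip: "lipschitz_wrt S \<mu> B"
    and \<beta>: "0 < \<beta>" and C: "cocoercive_wrt S \<beta> C" and \<gamma>: "0 < \<gamma>"
    and L: "0 \<le> L" and M: "lipschitz_wrt S L (\<lambda>v. \<gamma> *\<^sub>R M v - S v)"
    and y: "M x - (B x + C x) + (1 / \<gamma>) *\<^sub>R u - M y \<in> A y"
    and x': "x' = y - \<gamma> *\<^sub>R inv S (B y) + \<gamma> *\<^sub>R inv S (B x)"
    and u': "u' = (\<gamma> *\<^sub>R M y - S y) - (\<gamma> *\<^sub>R M x - S x)"
    and u: "2 * inner u (y - x) \<le> L0 * (normS S (y0 - x0))\<^sup>2 + L0 * (normS S (y - x))\<^sup>2"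
    and z: "z \<in> zer3 A B C"
  shows "(normS S (x' - z))\<^sup>2 + 2 * inner u' (x' - z) + L * (normS S (y - x))\<^sup>2
    \<le> (normS S (x - z))\<^sup>2 + 2 * inner u (x - z) + L0 * (normS S (y0 - x0))\<^sup>2
      - (1 - L0 - L - 2 * \<gamma> * L * \<mu> - \<gamma>\<^sup>2 * \<mu>\<^sup>2 - \<gamma> * \<beta> / 2) * (normS S (y - x))\<^sup>2"
proof -
  let ?d = "y - x" and ?T = "inv S (B y - B x)"
  let ?N = "(normS S ?d)\<^sup>2"
  have u_diff: "u - u' - S ?d = u + \<gamma> *\<^sub>R (M x - M y)"
    by (simp add: u' linear_diff[OF pos_op_linear] scaleR_diff_right)
  have "(1 / \<gamma>) *\<^sub>R (u - u' - S ?d) = (1 / \<gamma>) *\<^sub>R u + (M x - M y)"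
    unfolding u_diff using \<gamma> by (simp add: scaleR_add_right)
  then have "(1 / \<gamma>) *\<^sub>R (u - u' - S ?d) - (B x + C x) \<in> A y"
    using y by (simp add: algebra_simps)
  moreover have x'_eq: "x' = y - \<gamma> *\<^sub>R ?T"
    by (simp add: x' pos_op_inv_diff algebra_simps)
  ultimately have step: "(normS S (x' - z))\<^sup>2 \<le> (normS S (x - z))\<^sup>2
      - (1 - \<gamma>\<^sup>2 * \<mu>\<^sup>2 - \<gamma> * \<beta> / 2) * ?N + 2 * inner (u - u') (y - z)"
    by (rule fbhf_step_estimate[OF A B_mono B_lip \<beta> C \<gamma> _ _ z])
  have "- inner u' ?T \<le> L * \<mu> * ?N"
    using lipschitz_wrt_inner_inv_le[OF M B_lip L, of y x] by (simp add: u')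
  then have u'_bound: "- (\<gamma> * inner u' ?T) \<le> \<gamma> * (L * \<mu> * ?N)"
    using mult_left_mono[of _ _ \<gamma>] \<gamma> by fastforce
  have "inner u' (x' - z) = inner u' (y - z) - \<gamma> * inner u' ?T"
    by (simp add: x'_eq inner_diff_right algebra_simps)
  moreover have "inner u (x - z) = inner u (y - z) - inner u ?d"
    by (simp add: inner_diff_right)
  moreover have "(1 - L0 - L - 2 * \<gamma> * L * \<mu> - \<gamma>\<^sup>2 * \<mu>\<^sup>2 - \<gamma> * \<beta> / 2) * ?N
      = (1 - \<gamma>\<^sup>2 * \<mu>\<^sup>2 - \<gamma> * \<beta> / 2) * ?N - L0 * ?N - L * ?N - 2 * (\<gamma> * (L * \<mu> * ?N))"
    by (simp add: algebra_simps)
  ultimately show ?thesis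
    using step u u'_bound inner_diff_left[of u u' "y - z"] by argo
qed

end

theorem lemma3p1:
  fixes S :: "'a::{real_inner, complete_space} \<Rightarrow> 'a"
    and A :: "'a \<Rightarrow> 'a set" and B C :: "'a \<Rightarrow> 'a"
    and \<mu> \<beta> \<gamma> :: real
    and \<gamma>s Ls :: "nat \<Rightarrow> real" and M :: "nat \<Rightarrow> 'a \<Rightarrow> 'a"
    and x y u :: "nat \<Rightarrow> 'a" and xstar :: 'a and k :: nat
  assumes S: "pos_op S"
    and A: "maximal_monotone A"
    and B_mono: "monotone_single B" and mu: "\<mu> \<ge> 0" and B_lip: "lipschitz_wrt S \<mu> B"
    and beta: "\<beta> > 0" and C: "cocoercive_wrt S \<beta> C"
    and zer_ne: "zer3 A B C \<noteq> {}"
    and gamma: "\<gamma> > 0" and gammas: "\<And>j. \<gamma>s j \<ge> \<gamma>"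
    and Ls: "\<And>j. 0 \<le> Ls j \<and> Ls j < 1"
    and M: "\<And>j. lipschitz_wrt S (Ls j) (\<lambda>z. \<gamma>s j *\<^sub>R M j z - S z)"
    and y_step: "\<And>j. M j (x j) - (B (x j) + C (x j)) + (1 / \<gamma>s j) *\<^sub>R u j - M j (y j) \<in> A (y j)"
    and x_step: "\<And>j. x (Suc j) = y j - \<gamma>s j *\<^sub>R inv S (B (y j)) + \<gamma>s j *\<^sub>R inv S (B (x j))"
    and u_step: "\<And>j. u (Suc j) = (\<gamma>s j *\<^sub>R M j (y j) - S (y j)) - (\<gamma>s j *\<^sub>R M j (x j) - S (x j))"
    and xstar: "xstar \<in> zer3 A B C"
    and k: "k \<ge> 1"
  shows "Phi S x y u Ls (Suc k) xstar \<le> Phi S x y u Ls k xstar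
     - (1 - Ls (k - 1) - Ls k - 2 * \<gamma>s k * Ls k * \<mu> - (\<gamma>s k)\<^sup>2 * \<mu>\<^sup>2 - \<gamma>s k * \<beta> / 2)
       * (normS S (y k - x k))\<^sup>2"
proof -
  \<comment> \<open>Of (A1) only monotonicity of \<open>A\<close>, \<open>\<gamma>s k > 0\<close> and \<open>Ls j \<ge> 0\<close> enter this one-step estimate.\<close>
  obtain j where j: "k = Suc j" using k by (cases k) auto
  have "2 * inner (u k) (y k - x k)
      \<le> Ls j * (normS S (y j - x j))\<^sup>2 + Ls j * (normS S (y k - x k))\<^sup>2"
    using lipschitz_wrt_inner_le_sum_squares[OF S M[of j]] Ls[of j] by (simp add: u_step j)
  moreover have "0 < \<gamma>s k"
    using gamma gammas[of k] by linarith
  moreover have "monotone_op A"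
    using A unfolding maximal_monotone_def by blast
  ultimately have "(normS S (x (Suc k) - xstar))\<^sup>2 + 2 * inner (u (Suc k)) (x (Suc k) - xstar)
      + Ls k * (normS S (y k - x k))\<^sup>2
    \<le> (normS S (x k - xstar))\<^sup>2 + 2 * inner (u k) (x k - xstar) + Ls j * (normS S (y j - x j))\<^sup>2
      - (1 - Ls j - Ls k - 2 * \<gamma>s k * Ls k * \<mu> - (\<gamma>s k)\<^sup>2 * \<mu>\<^sup>2 - \<gamma>s k * \<beta> / 2)
        * (normS S (y k - x k))\<^sup>2"
    using nfbhf_m_step_estimate[OF S _ B_mono B_lip beta C _ _ M[of k] y_step x_step u_step _ xstar] Ls[of k]
    by blast
  then show ?thesis
    by (simp add: Phi_def j)
qed

end
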